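(* There exists a change of section $g$ such that $\sum_{j=1}^p {}^gm_{i,j}=m$ for every $i\in\{1,\dots,p\}$ (such $g$ are called appropriate). Moreover the appropriate $g$-changed process is unique: if $g_1,g_2$ are appropriate changes of section then ${}^{g_1}\mu_{i,j}={}^{g_2}\mu_{i,j}$ for all $i,j$.
   Context: Fix integers $d,p\ge 1$. Let $(Z_n)=(A_n,M_n)$ be a Markov-additive process on $\mathbb{Z}^d\times\{1,\dots,p\}$ (a Markov chain with $\mathbb{P}_{(x,i)}((A_1,M_1)=(x',i'))=\mathbb{P}_{(0,i)}((A_1,M_1)=(x'-x,i'))$), with jump matrix $\mu_{i,j}(x)=\mathbb{P}_{(0,i)}((A_1,M_1)=(x,j))$, assumed irreducible, aperiodic (for every state, the gcd of possible return times is $1$), with finite exponential moments ($\sum_xe^{\alpha\|x\|}\mu_{i,j}(x)<\infty$ for all $\alpha>0$). The matrix $\big(\sum_x\mu_{i,j}(x)\big)_{i,j}$ is the transition matrix of $(M_n)$, with unique stationary distribution $\pi$. Local drifts $m_{i,j}=\sum_x x\mu_{i,j}(x)$, global drift $m=\sum_{i,j}\pi_im_{i,j}$. A change of section is a real $p\times d$ matrix $g$ with rows $g_1,\dots,g_p$; the $g$-changed process has jump measures ${}^g\mu_{i,j}(x)=\mu_{i,j}(x+g_j-g_i)$, $x\in\mathbb{R}^d$, and local drifts ${}^gm_{i,j}=\sum_{x\in\mathbb{R}^d}x\,{}^g\mu_{i,j}(x)$. *)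

theory Defs
  imports "HOL-Analysis.Analysis"
begin

text \<open>Jump kernels are functions mu i j :: real^'d => real, supported on the lattice Z^d
  (points with all coordinates integer). The modulating states {1..p} are a finite type 'p,
  and the dimension d is the finite index type 'd.\<close>

definition lattice :: "(real^'d) set" where
  "lattice = {x. \<forall>k. x $ k \<in> \<int>}"

definition MAP_kernel :: "('p::finite \<Rightarrow> 'p \<Rightarrow> real^'d \<Rightarrow> real) \<Rightarrow> bool" where
  "MAP_kernel \<mu> \<longleftrightarrow>
     (\<forall>i j x. 0 \<le> \<mu> i j x) \<and>
     (\<forall>i j x. x \<notin> lattice \<longrightarrow> \<mu> i j x = 0) \<and>
     (\<forall>i j. \<mu> i j summable_on UNIV) \<and>
     (\<forall>i. (\<Sum>j\<in>UNIV. infsum (\<mu> i j) UNIV) = 1)"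

definition exp_moments :: "('p::finite \<Rightarrow> 'p \<Rightarrow> real^'d \<Rightarrow> real) \<Rightarrow> bool" where
  "exp_moments \<mu> \<longleftrightarrow>
     (\<forall>\<alpha>>0. \<forall>i j. (\<lambda>x. exp (\<alpha> * norm x) * \<mu> i j x) summable_on UNIV)"

text \<open>Possible n-step transitions of the chain Z_n = (A_n, M_n): there is a path of n jumps
  each having positive probability (equivalently, the n-step transition probability is > 0).\<close>
inductive steps :: "('p \<Rightarrow> 'p \<Rightarrow> real^'d \<Rightarrow> real) \<Rightarrow> nat \<Rightarrow> ((real^'d) \<times> 'p) \<Rightarrow> ((real^'d) \<times> 'p) \<Rightarrow> bool"
  for \<mu> where
  steps_0: "steps \<mu> 0 s s"
| steps_Suc: "steps \<mu> n s (y, k) \<Longrightarrow> 0 < \<mu> k j (z - y) \<Longrightarrow> steps \<mu> (Suc n) s (z, j)"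

definition irreducible_MAP :: "('p::finite \<Rightarrow> 'p \<Rightarrow> real^'d \<Rightarrow> real) \<Rightarrow> bool" where
  "irreducible_MAP \<mu> \<longleftrightarrow>
     (\<forall>x i y j. x \<in> lattice \<longrightarrow> y \<in> lattice \<longrightarrow> (\<exists>n. steps \<mu> n (x, i) (y, j)))"

definition aperiodic_MAP :: "('p::finite \<Rightarrow> 'p \<Rightarrow> real^'d \<Rightarrow> real) \<Rightarrow> bool" where
  "aperiodic_MAP \<mu> \<longleftrightarrow>
     (\<forall>x i. x \<in> lattice \<longrightarrow> Gcd {n. 0 < n \<and> steps \<mu> n (x, i) (x, i)} = (1::nat))"

definition trans_mat :: "('p \<Rightarrow> 'p \<Rightarrow> real^'d \<Rightarrow> real) \<Rightarrow> 'p \<Rightarrow> 'p \<Rightarrow> real" where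
  "trans_mat \<mu> i j = infsum (\<mu> i j) UNIV"

definition stationary :: "('p::finite \<Rightarrow> 'p \<Rightarrow> real^'d \<Rightarrow> real) \<Rightarrow> ('p \<Rightarrow> real) \<Rightarrow> bool" where
  "stationary \<mu> \<pi> \<longleftrightarrow> (\<forall>i. 0 \<le> \<pi> i) \<and> (\<Sum>i\<in>UNIV. \<pi> i) = 1 \<and>
     (\<forall>j. (\<Sum>i\<in>UNIV. \<pi> i * trans_mat \<mu> i j) = \<pi> j)"

definition local_drift :: "('p \<Rightarrow> 'p \<Rightarrow> real^'d \<Rightarrow> real) \<Rightarrow> 'p \<Rightarrow> 'p \<Rightarrow> real^'d" where
  "local_drift \<mu> i j = infsum (\<lambda>x. \<mu> i j x *\<^sub>R x) UNIV"

definition global_drift :: "('p::finite \<Rightarrow> 'p \<Rightarrow> real^'d \<Rightarrow> real) \<Rightarrow> ('p \<Rightarrow> real) \<Rightarrow> real^'d" where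
  "global_drift \<mu> \<pi> = (\<Sum>i\<in>UNIV. \<Sum>j\<in>UNIV. \<pi> i *\<^sub>R local_drift \<mu> i j)"

definition changed :: "('p \<Rightarrow> real^'d) \<Rightarrow> ('p \<Rightarrow> 'p \<Rightarrow> real^'d \<Rightarrow> real) \<Rightarrow> 'p \<Rightarrow> 'p \<Rightarrow> real^'d \<Rightarrow> real" where
  "changed g \<mu> i j x = \<mu> i j (x + g j - g i)"

definition appropriate :: "('p::finite \<Rightarrow> 'p \<Rightarrow> real^'d \<Rightarrow> real) \<Rightarrow> ('p \<Rightarrow> real) \<Rightarrow> ('p \<Rightarrow> real^'d) \<Rightarrow> bool" where
  "appropriate \<mu> \<pi> g \<longleftrightarrow>
     (\<forall>i. (\<Sum>j\<in>UNIV. local_drift (changed g \<mu>) i j) = global_drift \<mu> \<pi>)"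

end

theory Submission
  imports Defs
begin

text \<open>Write \<open>P\<close> for the transition matrix of the modulating chain and \<open>r\<^sub>i = \<Sum>\<^sub>j m\<^sub>i\<^sub>j\<close>.
  Changing the section by \<open>g\<close> replaces \<open>m\<^sub>i\<^sub>j\<close> by \<open>m\<^sub>i\<^sub>j - P\<^sub>i\<^sub>j (g\<^sub>j - g\<^sub>i)\<close>, so \<open>g\<close> is
  appropriate iff it solves the Poisson equation \<open>(I - P) g = m - r\<close>. For an irreducible chain
  the maximum principle makes every \<open>P\<close>-harmonic function constant, so \<open>I - P\<close> is injective
  on a hyperplane transversal to the constants and maps it onto the \<open>\<pi>\<close>-orthogonal hyperplane
  (stationarity of \<open>\<pi>\<close>); the right-hand side lies there because \<open>m = \<Sum>\<^sub>i \<pi>\<^sub>i r\<^sub>i\<close>.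
  Two appropriate sections differ by a harmonic, hence constant, vector, which leaves every
  \<open>g\<^sub>j - g\<^sub>i\<close> and thus the changed kernel unchanged.\<close>

definition harmonic :: "('p::finite \<Rightarrow> 'p \<Rightarrow> real) \<Rightarrow> ('p \<Rightarrow> 'a::real_vector) \<Rightarrow> bool" where
  "harmonic P h \<longleftrightarrow> (\<forall>i. (\<Sum>j\<in>UNIV. P i j *\<^sub>R h j) = h i)"

lemma harmonic_real_const:
  fixes P :: "'p::finite \<Rightarrow> 'p \<Rightarrow> real" and h :: "'p \<Rightarrow> real"
  assumes nonneg: "\<And>i j. 0 \<le> P i j" and row_sum: "\<And>i. (\<Sum>j\<in>UNIV. P i j) = 1"
    and connected: "\<And>i j. (i, j) \<in> {(a, b). 0 < P a b}\<^sup>*"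
    and harm: "harmonic P h"
  shows "h i = h j"
proof -
  define M where "M = Max (range h)"
  have le_M: "h x \<le> M" for x
    unfolding M_def by simp
  have "M \<in> range h"
    unfolding M_def by (rule Max_in) auto
  then obtain i0 where i0: "h i0 = M"
    by auto
  have step: "h b = M" if "h a = M" "0 < P a b" for a b
  proof -
    have "(\<Sum>j\<in>UNIV. P a j * (M - h j)) = M * (\<Sum>j\<in>UNIV. P a j) - (\<Sum>j\<in>UNIV. P a j * h j)"
      by (simp add: right_diff_distrib sum_subtractf sum_distrib_left mult.commute)
    also have "\<dots> = 0"
      using harm that(1) row_sum[of a] unfolding harmonic_def by simp
    finally have "P a b * (M - h b) = 0"
      using sum_nonneg_eq_0_iff[of UNIV "\<lambda>j. P a j * (M - h j)"] nonneg le_M by simp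
    then show ?thesis
      using that(2) by simp
  qed
  have "h x = M" if "(i0, x) \<in> {(a, b). 0 < P a b}\<^sup>*" for x
    using that by (induction rule: rtrancl_induct) (use i0 step in auto)
  then show ?thesis
    using connected by metis
qed

lemma harmonic_const:
  fixes P :: "'p::finite \<Rightarrow> 'p \<Rightarrow> real" and h :: "'p \<Rightarrow> 'a::euclidean_space"
  assumes "\<And>i j. 0 \<le> P i j" "\<And>i. (\<Sum>j\<in>UNIV. P i j) = 1"
    and "\<And>i j. (i, j) \<in> {(a, b). 0 < P a b}\<^sup>*"
    and harm: "harmonic P h"
  shows "h i = h j"
proof (rule euclidean_eqI)
  fix b :: 'a
  have "harmonic P (\<lambda>i. h i \<bullet> b)"
    unfolding harmonic_def
  proof
    fix i
    have "(\<Sum>j\<in>UNIV. P i j *\<^sub>R h j) \<bullet> b = h i \<bullet> b"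
      using harm by (simp add: harmonic_def)
    then show "(\<Sum>j\<in>UNIV. P i j *\<^sub>R (h j \<bullet> b)) = h i \<bullet> b"
      by (simp add: inner_sum_left)
  qed
  then show "h i \<bullet> b = h j \<bullet> b"
    by (rule harmonic_real_const[OF assms(1-3)])
qed

lemma poisson_equation_solvable_real:
  fixes P :: "'p::finite \<Rightarrow> 'p \<Rightarrow> real" and \<pi> c :: "'p \<Rightarrow> real"
  assumes harmonic_imp_const: "\<And>h i j. harmonic P (h :: 'p \<Rightarrow> real) \<Longrightarrow> h i = h j"
    and stationary: "\<And>j. (\<Sum>i\<in>UNIV. \<pi> i * P i j) = \<pi> j" and nonzero: "\<exists>i. \<pi> i \<noteq> 0"
    and orthogonal: "(\<Sum>i\<in>UNIV. \<pi> i * c i) = 0"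
  shows "\<exists>v. \<forall>i. v i - (\<Sum>j\<in>UNIV. P i j * v j) = c i"
proof -
  txt \<open>\<open>L = I - P\<close> is injective on \<open>U\<close> and maps it into \<open>H\<close>; both have codimension one.\<close>
  define A :: "real^'p^'p" where "A = (\<chi> i j. P i j)"
  define L where "L v = v - A *v v" for v
  define pv :: "real^'p" where "pv = (\<chi> i. \<pi> i)"
  fix i0 :: 'p
  define U where "U = {v :: real^'p. axis i0 1 \<bullet> v = 0}"
  define H where "H = {y :: real^'p. pv \<bullet> y = 0}"
  have L_component: "L v $ i = v $ i - (\<Sum>j\<in>UNIV. P i j * v $ j)" for v i
    by (simp add: L_def A_def matrix_vector_mult_def)
  have lin: "linear L"
    unfolding L_def
    by (intro linear_compose_sub bounded_linear.linear[OF bounded_linear_ident] matrix_vector_mul_linear)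
  have "pv \<noteq> 0"
    using nonzero by (auto simp: pv_def vec_eq_iff)
  then have "dim H = dim U"
    unfolding H_def U_def by (simp add: dim_hyperplane)
  have inj: "inj_on L U"
  proof (rule inj_onI)
    fix v w assume "v \<in> U" "w \<in> U" "L v = L w"
    then have "L (v - w) = 0"
      by (simp add: linear_diff[OF lin])
    have "harmonic P (\<lambda>i. (v - w) $ i)"
      unfolding harmonic_def
    proof
      fix i
      have "(v - w) $ i - (\<Sum>j\<in>UNIV. P i j * (v - w) $ j) = 0"
        using L_component[of "v - w" i] \<open>L (v - w) = 0\<close> by (simp only: zero_index)
      then show "(\<Sum>j\<in>UNIV. P i j *\<^sub>R (v - w) $ j) = (v - w) $ i"
        by simp
    qed
    moreover have "(v - w) $ i0 = 0"
      using \<open>v \<in> U\<close> \<open>w \<in> U\<close> by (simp add: U_def inner_axis')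
    ultimately have "(v - w) $ i = 0" for i
      using harmonic_imp_const[of "\<lambda>i. (v - w) $ i" i i0] by simp
    then show "v = w"
      by (simp add: vec_eq_iff)
  qed
  have "pv \<bullet> L v = 0" for v
  proof -
    have "pv v* A = pv"
      using stationary by (simp add: pv_def A_def vector_matrix_mult_def vec_eq_iff mult.commute)
    then have "pv \<bullet> (A *v v) = pv \<bullet> v"
      by (metis dot_lmul_matrix)
    then show ?thesis
      by (simp add: L_def inner_diff_right)
  qed
  then have "L ` U \<subseteq> H"
    unfolding H_def by auto
  moreover have "dim (L ` U) = dim H"
  proof -
    have "span U = U"
      unfolding U_def by (rule span_eq_iff[THEN iffD2, OF subspace_hyperplane])
    then have "dim (L ` U) = dim U"
      using dim_image_eq[OF lin, of U] inj by (simp only:)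
    then show ?thesis
      using \<open>dim H = dim U\<close> by simp
  qed
  ultimately have "L ` U = H"
    using subspace_dim_equal[OF linear_subspace_image[OF lin]] subspace_hyperplane
    unfolding H_def U_def by (metis order_refl)
  moreover have "(\<chi> i. c i) \<in> H"
    using orthogonal by (simp add: H_def pv_def inner_vec_def)
  ultimately obtain v where "L v = (\<chi> i. c i)"
    by auto
  then show ?thesis
    using L_component by (metis vec_lambda_beta)
qed

lemma poisson_equation_solvable:
  fixes P :: "'p::finite \<Rightarrow> 'p \<Rightarrow> real" and \<pi> :: "'p \<Rightarrow> real" and c :: "'p \<Rightarrow> 'a::euclidean_space"
  assumes harmonic_imp_const: "\<And>h i j. harmonic P (h :: 'p \<Rightarrow> real) \<Longrightarrow> h i = h j"
    and stationary: "\<And>j. (\<Sum>i\<in>UNIV. \<pi> i * P i j) = \<pi> j" and nonzero: "\<exists>i. \<pi> i \<noteq> 0"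
    and orthogonal: "(\<Sum>i\<in>UNIV. \<pi> i *\<^sub>R c i) = 0"
  shows "\<exists>v. \<forall>i. v i - (\<Sum>j\<in>UNIV. P i j *\<^sub>R v j) = c i"
proof -
  have "\<exists>w. \<forall>i. w i - (\<Sum>j\<in>UNIV. P i j * w j) = c i \<bullet> b" for b
  proof (rule poisson_equation_solvable_real[OF harmonic_imp_const stationary nonzero])
    show "(\<Sum>i\<in>UNIV. \<pi> i * (c i \<bullet> b)) = 0"
      using arg_cong[OF orthogonal, of "\<lambda>x. x \<bullet> b"] by (simp add: inner_sum_left)
  qed
  then obtain w where w: "\<And>b i. w b i - (\<Sum>j\<in>UNIV. P i j * w b j) = c i \<bullet> b"
    by metis
  define v where "v i = (\<Sum>b\<in>Basis. w b i *\<^sub>R b)" for i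
  have v_inner: "v i \<bullet> b = w b i" if "b \<in> Basis" for i b
    using that by (simp add: v_def inner_sum_left inner_Basis if_distrib cong: if_cong)
  have "v i - (\<Sum>j\<in>UNIV. P i j *\<^sub>R v j) = c i" for i
  proof (rule euclidean_eqI)
    fix b :: 'a assume "b \<in> Basis"
    then show "(v i - (\<Sum>j\<in>UNIV. P i j *\<^sub>R v j)) \<bullet> b = c i \<bullet> b"
      using w[of b i] by (simp add: inner_diff_left inner_sum_left v_inner)
  qed
  then show ?thesis
    by blast
qed

lemma trans_mat_nonneg: "MAP_kernel \<mu> \<Longrightarrow> 0 \<le> trans_mat \<mu> i j"
  unfolding MAP_kernel_def trans_mat_def by (simp add: infsum_nonneg)

lemma trans_mat_row_sum: "MAP_kernel \<mu> \<Longrightarrow> (\<Sum>j\<in>UNIV. trans_mat \<mu> i j) = 1"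
  unfolding MAP_kernel_def trans_mat_def by simp

lemma trans_mat_pos:
  assumes "MAP_kernel \<mu>" and "0 < \<mu> i j x"
  shows "0 < trans_mat \<mu> i j"
proof -
  have "\<mu> i j summable_on UNIV" and "\<And>y. 0 \<le> \<mu> i j y"
    using assms(1) unfolding MAP_kernel_def by auto
  then have "infsum (\<mu> i j) {x} \<le> infsum (\<mu> i j) UNIV"
    by (intro infsum_mono_neutral) auto
  then show ?thesis
    using assms(2) unfolding trans_mat_def by simp
qed

lemma steps_trans_mat_rtrancl:
  assumes "steps \<mu> n s t" and "MAP_kernel \<mu>"
  shows "(snd s, snd t) \<in> {(a, b). 0 < trans_mat \<mu> a b}\<^sup>*"
  using assms
proof (induction rule: steps.induct)
  case (steps_0 s)
  then show ?case by simp
next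
  case (steps_Suc n s y k j z)
  then have "0 < trans_mat \<mu> k j"
    by (intro trans_mat_pos)
  with steps_Suc show ?case
    by (simp add: rtrancl_into_rtrancl)
qed

lemma harmonic_trans_mat_const:
  fixes \<mu> :: "'p::finite \<Rightarrow> 'p \<Rightarrow> real^'d \<Rightarrow> real" and h :: "'p \<Rightarrow> 'a::euclidean_space"
  assumes K: "MAP_kernel \<mu>" and I: "irreducible_MAP \<mu>" and "harmonic (trans_mat \<mu>) h"
  shows "h i = h j"
proof (rule harmonic_const[OF trans_mat_nonneg[OF K] trans_mat_row_sum[OF K] _ assms(3)])
  fix a b
  have "(0 :: real^'d) \<in> lattice"
    unfolding lattice_def by simp
  then obtain n where "steps \<mu> n (0, a) (0, b)"
    using I unfolding irreducible_MAP_def by blast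
  then show "(a, b) \<in> {(a, b). 0 < trans_mat \<mu> a b}\<^sup>*"
    using steps_trans_mat_rtrancl[OF _ K] by fastforce
qed

lemma drift_summable:
  assumes "MAP_kernel \<mu>" and "exp_moments \<mu>"
  shows "(\<lambda>x. \<mu> i j x *\<^sub>R x) summable_on UNIV"
proof -
  have exp_summable: "(\<lambda>x. exp (1 * norm x) * \<mu> i j x) summable_on UNIV"
    using assms(2)[unfolded exp_moments_def, rule_format, of 1] by simp
  have nonneg: "0 \<le> \<mu> i j x" for x
    using assms(1) unfolding MAP_kernel_def by auto
  have "norm (\<mu> i j x *\<^sub>R x) \<le> exp (1 * norm x) * \<mu> i j x" for x
  proof -
    have "norm x \<le> exp (norm x)"
      using exp_ge_add_one_self[of "norm x"] by linarith
    then show ?thesis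
      using mult_right_mono[OF _ nonneg[of x]] by (simp add: abs_of_nonneg[OF nonneg] mult.commute)
  qed
  then have "(\<lambda>x. norm (\<mu> i j x *\<^sub>R x)) summable_on UNIV"
    by (intro summable_on_comparison_test[OF exp_summable]) auto
  then show ?thesis
    by (rule abs_summable_summable)
qed

lemma local_drift_changed:
  assumes "MAP_kernel \<mu>" and "exp_moments \<mu>"
  shows "local_drift (changed g \<mu>) i j = local_drift \<mu> i j - trans_mat \<mu> i j *\<^sub>R (g j - g i)"
proof -
  define c where "c = g j - g i"
  have summable: "\<mu> i j summable_on UNIV"
    using assms(1) unfolding MAP_kernel_def by auto
  have "local_drift (changed g \<mu>) i j = infsum (\<lambda>x. (\<lambda>y. \<mu> i j y *\<^sub>R (y - c)) (x + c)) UNIV"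
    unfolding local_drift_def changed_def c_def by (simp add: add_diff_eq)
  also have "\<dots> = infsum (\<lambda>y. \<mu> i j y *\<^sub>R y + - (\<mu> i j y *\<^sub>R c)) UNIV"
    by (subst infsum_reindex_bij_betw[where g = "\<lambda>x. x + c"])
      (auto intro: bij_betw_byWitness[where f' = "\<lambda>y. y - c"] simp: scaleR_diff_right)
  also have "\<dots> = local_drift \<mu> i j - trans_mat \<mu> i j *\<^sub>R c"
    unfolding local_drift_def trans_mat_def
    by (subst infsum_add)
      (auto simp: infsum_uminus summable_on_uminus drift_summable[OF assms] summable
        summable_on_scaleR_left infsum_scaleR_left)
  finally show ?thesis
    unfolding c_def .
qed

lemma appropriate_iff_poisson:
  assumes K: "MAP_kernel \<mu>" and E: "exp_moments \<mu>"
  shows "appropriate \<mu> \<pi> g \<longleftrightarrow>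
    (\<forall>i. g i - (\<Sum>j\<in>UNIV. trans_mat \<mu> i j *\<^sub>R g j) = global_drift \<mu> \<pi> - (\<Sum>j\<in>UNIV. local_drift \<mu> i j))"
proof -
  have "(\<Sum>j\<in>UNIV. local_drift (changed g \<mu>) i j) =
    (\<Sum>j\<in>UNIV. local_drift \<mu> i j) - (\<Sum>j\<in>UNIV. trans_mat \<mu> i j *\<^sub>R g j) + g i" for i
  proof -
    have "(\<Sum>j\<in>UNIV. trans_mat \<mu> i j *\<^sub>R g i) = g i"
      using trans_mat_row_sum[OF K, of i] by (simp flip: scaleR_left.sum)
    then show ?thesis
      by (simp add: local_drift_changed[OF K E] scaleR_diff_right sum_subtractf)
  qed
  then show ?thesis
    unfolding appropriate_def by (auto simp: algebra_simps)
qed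

lemma weighted_drift_deviation_eq_0:
  assumes "stationary \<mu> \<pi>"
  shows "(\<Sum>i\<in>UNIV. \<pi> i *\<^sub>R (global_drift \<mu> \<pi> - (\<Sum>j\<in>UNIV. local_drift \<mu> i j))) = 0"
proof -
  have "(\<Sum>i\<in>UNIV. \<pi> i) = 1"
    using assms unfolding stationary_def by simp
  moreover have "global_drift \<mu> \<pi> = (\<Sum>i\<in>UNIV. \<pi> i *\<^sub>R (\<Sum>j\<in>UNIV. local_drift \<mu> i j))"
    unfolding global_drift_def by (simp add: scaleR_sum_right)
  ultimately show ?thesis
    by (simp add: scaleR_diff_right sum_subtractf flip: scaleR_left.sum)
qed

lemma harmonic_diff_appropriate:
  assumes "MAP_kernel \<mu>" and "exp_moments \<mu>"
    and "appropriate \<mu> \<pi> g1" and "appropriate \<mu> \<pi> g2"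
  shows "harmonic (trans_mat \<mu>) (\<lambda>i. g1 i - g2 i)"
  unfolding harmonic_def
proof
  fix i
  have "g1 i - (\<Sum>j\<in>UNIV. trans_mat \<mu> i j *\<^sub>R g1 j) = g2 i - (\<Sum>j\<in>UNIV. trans_mat \<mu> i j *\<^sub>R g2 j)"
    using assms(3,4) by (simp add: appropriate_iff_poisson[OF assms(1,2)])
  then show "(\<Sum>j\<in>UNIV. trans_mat \<mu> i j *\<^sub>R (g1 j - g2 j)) = g1 i - g2 i"
    by (simp add: scaleR_diff_right sum_subtractf algebra_simps)
qed

lemma changed_eq_if_diff_const:
  assumes "\<And>i j. g1 i - g2 i = g1 j - g2 j"
  shows "changed g1 \<mu> = changed g2 \<mu>"
proof -
  have "g1 j - g1 i = g2 j - g2 i" for i j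
    using assms[of j i] by (simp add: algebra_simps)
  then show ?thesis
    unfolding changed_def by (simp add: fun_eq_iff add_diff_eq[symmetric])
qed

theorem proposition2p6:
  fixes \<mu> :: "'p::finite \<Rightarrow> 'p \<Rightarrow> real^'d \<Rightarrow> real"
    and \<pi> :: "'p \<Rightarrow> real"
  assumes "MAP_kernel \<mu>"
    and "irreducible_MAP \<mu>"
    and "aperiodic_MAP \<mu>"
    and "exp_moments \<mu>"
    and "stationary \<mu> \<pi>"
  shows "(\<exists>g. appropriate \<mu> \<pi> g) \<and>
         (\<forall>g1 g2. appropriate \<mu> \<pi> g1 \<longrightarrow> appropriate \<mu> \<pi> g2 \<longrightarrow>
             (\<forall>i j. changed g1 \<mu> i j = changed g2 \<mu> i j))"
proof
  note K = assms(1) and I = assms(2) and E = assms(4) and S = assms(5)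
  have "\<exists>i. \<pi> i \<noteq> 0"
    using S unfolding stationary_def by (metis sum.neutral zero_neq_one)
  moreover have "(\<Sum>i\<in>UNIV. \<pi> i * trans_mat \<mu> i j) = \<pi> j" for j
    using S unfolding stationary_def by simp
  ultimately show "\<exists>g. appropriate \<mu> \<pi> g"
    using poisson_equation_solvable[OF harmonic_trans_mat_const[OF K I] _ _
        weighted_drift_deviation_eq_0[OF S]]
    unfolding appropriate_iff_poisson[OF K E] by blast
  show "\<forall>g1 g2. appropriate \<mu> \<pi> g1 \<longrightarrow> appropriate \<mu> \<pi> g2 \<longrightarrow>
          (\<forall>i j. changed g1 \<mu> i j = changed g2 \<mu> i j)"
  proof (intro allI impI)
    fix g1 g2 i j
    assume "appropriate \<mu> \<pi> g1" "appropriate \<mu> \<pi> g2"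
    then have "harmonic (trans_mat \<mu>) (\<lambda>i. g1 i - g2 i)"
      by (rule harmonic_diff_appropriate[OF K E])
    then have "g1 a - g2 a = g1 b - g2 b" for a b
      using harmonic_trans_mat_const[OF K I] by fastforce
    then show "changed g1 \<mu> i j = changed g2 \<mu> i j"
      using changed_eq_if_diff_const[of g1 g2 \<mu>] by simp
  qed
qed

end
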